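(* Let $D$ be a closed $\forall^+$ type of system $\mathcal F$ not containing the type constant $O$. Then $D$ is a syntactical data type, i.e. $D$ is both an input type and an output type.
   Context: $\lambda$-terms are those of the untyped $\lambda$-calculus; $Fv(t)$ denotes the free variables of $t$; a term is normal if it contains no $\beta$-redex. Types of system $\mathcal F$ are built from type variables and type constants (atomic, not quantifiable; $O$ is such a constant) with $\rightarrow$ and $\forall$; only proper types are considered (in every $\forall X A$, $X$ occurs free in $A$). Typing $\Gamma\vdash_{\mathcal F} t:A$ is given by: (ax) $\Gamma \vdash x_i : A_i$ for $x_i:A_i\in\Gamma$; ($\rightarrow_i$) from $\Gamma, x:B \vdash t : C$ infer $\Gamma \vdash \lambda x t : B \rightarrow C$; ($\rightarrow_e$) from $\Gamma \vdash u : B\rightarrow C$ and $\Gamma \vdash v : B$ infer $\Gamma \vdash (u)v : C$; ($\forall_i$) from $\Gamma \vdash t : A$, $X$ not free in $\Gamma$, infer $\Gamma \vdash t : \forall X A$; ($\forall_e$) from $\Gamma \vdash t : \forall X A$ infer $\Gamma \vdash t : A[C/X]$ for any type $C$. $\mathcal F_0$ is $\mathcal F$ without ($\forall_e$). Input type: a closed type $E$ such that for every normal $t$, $\vdash_{\mathcal F} t:E$ implies $\vdash_{\mathcal F_0} t:E$. Output type: a closed type $S$ not containing $O$ such that for every normal $t$ and variable $\alpha$, $\alpha:O\vdash_{\mathcal F} t:S$ implies $\alpha\notin Fv(t)$. The classes $\forall^+$, $\forall^-$: every type variable is both; if $A$ is $\forall^+$ (resp. $\forall^-$) and $B$ is $\forall^-$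 (resp. $\forall^+$) then $B\rightarrow A$ is $\forall^+$ (resp. $\forall^-$); if $A$ is $\forall^+$ and $X$ is free in $A$ then $\forall XA$ is $\forall^+$. *)

theory Defs
  imports Main
begin

section \<open>Types of system F (de Bruijn indices for type variables)\<close>

datatype ty = TVar nat | TConst nat | Arr ty ty | All ty

definition tyO :: ty where "tyO = TConst 0"

fun fvt :: "ty \<Rightarrow> nat set" where
  "fvt (TVar n) = {n}"
| "fvt (TConst c) = {}"
| "fvt (Arr A B) = fvt A \<union> fvt B"
| "fvt (All A) = {n. Suc n \<in> fvt A}"

fun consts_of :: "ty \<Rightarrow> nat set" where
  "consts_of (TVar n) = {}"
| "consts_of (TConst c) = {c}"
| "consts_of (Arr A B) = consts_of A \<union> consts_of B"
| "consts_of (All A) = consts_of A"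

definition closed_ty :: "ty \<Rightarrow> bool" where
  "closed_ty A \<longleftrightarrow> fvt A = {}"

fun proper :: "ty \<Rightarrow> bool" where
  "proper (TVar n) = True"
| "proper (TConst c) = True"
| "proper (Arr A B) = (proper A \<and> proper B)"
| "proper (All A) = (0 \<in> fvt A \<and> proper A)"

fun lift :: "nat \<Rightarrow> ty \<Rightarrow> ty" where
  "lift k (TVar n) = (if n < k then TVar n else TVar (Suc n))"
| "lift k (TConst c) = TConst c"
| "lift k (Arr A B) = Arr (lift k A) (lift k B)"
| "lift k (All A) = All (lift (Suc k) A)"

fun subst :: "nat \<Rightarrow> ty \<Rightarrow> ty \<Rightarrow> ty" where
  "subst k C (TVar n) = (if n < k then TVar n else if n = k then C else TVar (n - 1))"
| "subst k C (TConst c) = TConst c"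
| "subst k C (Arr A B) = Arr (subst k C A) (subst k C B)"
| "subst k C (All A) = All (subst (Suc k) (lift 0 C) A)"

datatype trm = Var nat | Lam nat trm | App trm trm

fun fv :: "trm \<Rightarrow> nat set" where
  "fv (Var x) = {x}"
| "fv (Lam x t) = fv t - {x}"
| "fv (App u v) = fv u \<union> fv v"

fun normal :: "trm \<Rightarrow> bool" where
  "normal (Var x) = True"
| "normal (Lam x t) = normal t"
| "normal (App (Lam x t) v) = False"
| "normal (App u v) = (normal u \<and> normal v)"

section \<open>Typing in F (flag True) and F0 (flag False, no \<forall>-elimination)\<close>

type_synonym ctx = "nat \<Rightarrow> ty option"

inductive typing :: "bool \<Rightarrow> ctx \<Rightarrow> trm \<Rightarrow> ty \<Rightarrow> bool" where
  ax: "\<Gamma> x = Some A \<Longrightarrow> typing e \<Gamma> (Var x) A"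
| arr_i: "proper B \<Longrightarrow> typing e (\<Gamma>(x \<mapsto> B)) t C \<Longrightarrow> typing e \<Gamma> (Lam x t) (Arr B C)"
| arr_e: "typing e \<Gamma> u (Arr B C) \<Longrightarrow> typing e \<Gamma> v B \<Longrightarrow> typing e \<Gamma> (App u v) C"
| all_i: "0 \<in> fvt A \<Longrightarrow> typing e (map_option (lift 0) \<circ> \<Gamma>) t A \<Longrightarrow> typing e \<Gamma> t (All A)"
| all_e: "e \<Longrightarrow> proper C \<Longrightarrow> typing e \<Gamma> t (All A) \<Longrightarrow> typing e \<Gamma> t (subst 0 C A)"

abbreviation typF :: "ctx \<Rightarrow> trm \<Rightarrow> ty \<Rightarrow> bool" where
  "typF \<equiv> typing True"

abbreviation typF0 :: "ctx \<Rightarrow> trm \<Rightarrow> ty \<Rightarrow> bool" where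
  "typF0 \<equiv> typing False"

definition input_type :: "ty \<Rightarrow> bool" where
  "input_type E \<longleftrightarrow> proper E \<and> closed_ty E \<and>
     (\<forall>t. normal t \<longrightarrow> typF Map.empty t E \<longrightarrow> typF0 Map.empty t E)"

definition output_type :: "ty \<Rightarrow> bool" where
  "output_type S \<longleftrightarrow> proper S \<and> closed_ty S \<and> 0 \<notin> consts_of S \<and>
     (\<forall>t \<alpha>. normal t \<longrightarrow> typF (Map.empty(\<alpha> \<mapsto> tyO)) t S \<longrightarrow> \<alpha> \<notin> fv t)"

definition syntactical_data_type :: "ty \<Rightarrow> bool" where
  "syntactical_data_type D \<longleftrightarrow> input_type D \<and> output_type D"

inductive all_pos :: "ty \<Rightarrow> bool" and all_neg :: "ty \<Rightarrow> bool" where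
  pos_var: "all_pos (TVar n)"
| neg_var: "all_neg (TVar n)"
| pos_arr: "all_pos A \<Longrightarrow> all_neg B \<Longrightarrow> all_pos (Arr B A)"
| neg_arr: "all_neg A \<Longrightarrow> all_pos B \<Longrightarrow> all_neg (Arr B A)"
| pos_all: "all_pos A \<Longrightarrow> 0 \<in> fvt A \<Longrightarrow> all_pos (All A)"

end

theory Submission
  imports Defs
begin

text \<open>
  Call a normal term neutral if it is not an abstraction, i.e. a variable applied to normal arguments.
  In a context whose types are \<open>\<forall>\<^sup>-\<close> or \<open>O\<close>, the type of a neutral term is read off from the type of its
  head variable: it is again \<open>O\<close> or \<open>\<forall>\<^sup>-\<close>, in particular never a \<open>\<forall>\<close>-type, and its arguments receive
  \<open>\<forall>\<^sup>+\<close>-types. Hence \<open>\<forall>\<close>-elimination is only ever applied to abstractions, where it can be replaced by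
  substitution into the premise of the preceding \<open>\<forall>\<close>-introduction; this makes every derivation of a
  \<open>\<forall>\<^sup>+\<close>-type an \<open>\<F>\<^sub>0\<close>-derivation. Likewise a variable of type \<open>O\<close> can only occur as a neutral term of
  type \<open>O\<close>, whereas the classes \<open>\<forall>\<^sup>+\<close> and \<open>\<forall>\<^sup>-\<close> contain no type constants at all.
\<close>

lemma fvt_lift_less: "n < k \<Longrightarrow> n \<in> fvt (lift k A) \<longleftrightarrow> n \<in> fvt A"
  by (induction A arbitrary: n k) auto

lemma lift_notin_fvt: "k \<notin> fvt (lift k A)"
  by (induction A arbitrary: k) auto

lemma proper_lift: "proper A \<Longrightarrow> proper (lift k A)"
  by (induction A arbitrary: k) (auto simp: fvt_lift_less)

lemma fvt_subst_less: "n < k \<Longrightarrow> n \<in> fvt A \<Longrightarrow> n \<in> fvt (subst k C A)"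
  by (induction A arbitrary: n k C) auto

lemma proper_subst: "proper A \<Longrightarrow> proper C \<Longrightarrow> proper (subst k C A)"
  by (induction A arbitrary: k C) (auto simp: proper_lift fvt_subst_less)

lemma subst_lift: "subst k C (lift k B) = B"
  by (induction B arbitrary: k C) auto

lemma lift_lift: "j \<le> k \<Longrightarrow> lift (Suc k) (lift j C) = lift j (lift k C)"
  by (induction C arbitrary: j k) auto

lemma subst_lift_lift: "j \<le> k \<Longrightarrow> subst (Suc k) (lift j C) (lift j B) = lift j (subst k C B)"
proof (induction B arbitrary: j k C)
  case (All B)
  then show ?case by (simp add: lift_lift[of 0 j C, symmetric])
qed auto

inductive_simps all_pos_simps:
  "all_pos (TVar n)" "all_pos (TConst c)" "all_pos (Arr A B)" "all_pos (All A)"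
inductive_simps all_neg_simps:
  "all_neg (TVar n)" "all_neg (TConst c)" "all_neg (Arr A B)" "all_neg (All A)"

lemma all_pos_lift: "all_pos A \<Longrightarrow> all_pos (lift k A)"
  and all_neg_lift: "all_neg B \<Longrightarrow> all_neg (lift k B)"
  by (induction A and B arbitrary: k and k rule: all_pos_all_neg.inducts)
    (auto simp: all_pos_simps all_neg_simps fvt_lift_less)

lemma all_pos_all_neg_subst_reflect:
  "proper A \<Longrightarrow> (all_pos (subst k C A) \<longrightarrow> all_pos A) \<and> (all_neg (subst k C A) \<longrightarrow> all_neg A)"
  by (induction A arbitrary: k C) (auto simp: all_pos_simps all_neg_simps)

lemma all_pos_All_of_subst: "proper (All A) \<Longrightarrow> all_pos (subst 0 C A) \<Longrightarrow> all_pos (All A)"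
  using all_pos_all_neg_subst_reflect[of A 0 C] by (auto intro: pos_all)

lemma tyO_not_all_pos: "\<not> all_pos tyO"
  by (simp add: tyO_def all_pos_simps)

lemma typF0_subst:
  assumes "typF0 \<Gamma> t A" and "proper C"
  shows "typF0 (map_option (subst k C) \<circ> \<Gamma>) t (subst k C A)"
  using assms
proof (induction False \<Gamma> t A arbitrary: k C rule: typing.induct)
  case (ax \<Gamma> x A)
  then show ?case by (auto intro: typing.ax)
next
  case (arr_i B \<Gamma> x t C')
  have "map_option (subst k C) \<circ> \<Gamma>(x \<mapsto> B) = (map_option (subst k C) \<circ> \<Gamma>)(x \<mapsto> subst k C B)"
    by auto
  with arr_i show ?case by (auto intro!: typing.arr_i proper_subst)
next
  case (arr_e \<Gamma> u B C' v)
  then show ?case by (metis subst.simps(3) typing.arr_e)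
next
  case (all_i A \<Gamma> t)
  have ctx: "map_option (subst (Suc k) (lift 0 C)) \<circ> (map_option (lift 0) \<circ> \<Gamma>)
      = map_option (lift 0) \<circ> (map_option (subst k C) \<circ> \<Gamma>)"
    by (auto simp: fun_eq_iff option.map_comp subst_lift_lift[of 0 k] intro!: option.map_cong0)
  have "0 \<in> fvt (subst (Suc k) (lift 0 C) A)"
    using all_i(1) by (simp add: fvt_subst_less)
  moreover have "typF0 (map_option (lift 0) \<circ> (map_option (subst k C) \<circ> \<Gamma>)) t
      (subst (Suc k) (lift 0 C) A)"
    using all_i(3)[of "lift 0 C" "Suc k"] all_i(4) by (simp add: ctx proper_lift)
  ultimately show ?case by (simp add: typing.all_i)
qed simp

lemma ctx_subst_lift: "map_option (subst 0 C) \<circ> (map_option (lift 0) \<circ> \<Gamma>) = \<Gamma>"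
  by (auto simp: fun_eq_iff option.map_comp subst_lift comp_def option.map_ident)

text \<open>An \<open>\<F>\<^sub>0\<close>-derivation of an abstraction at a \<open>\<forall>\<close>-type ends with \<open>\<forall>\<close>-introduction.\<close>

lemma typF0_Lam_all_e:
  assumes "typF0 \<Gamma> (Lam x u) (All A)" and "proper C"
  shows "typF0 \<Gamma> (Lam x u) (subst 0 C A)"
proof -
  from assms(1) have "typF0 (map_option (lift 0) \<circ> \<Gamma>) (Lam x u) A"
    by (cases rule: typing.cases) auto
  from typF0_subst[OF this assms(2), of 0] show ?thesis
    by (simp add: ctx_subst_lift)
qed

lemma typing_proper:
  "typing e \<Gamma> t T \<Longrightarrow> (\<forall>x A. \<Gamma> x = Some A \<longrightarrow> proper A) \<Longrightarrow> proper T"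
proof (induction rule: typing.induct)
  case (all_i A e \<Gamma> t)
  have "\<forall>x B. (map_option (lift 0) \<circ> \<Gamma>) x = Some B \<longrightarrow> proper B"
    using all_i.prems by (auto simp: proper_lift)
  with all_i show ?case by simp
qed (auto intro: proper_subst)

definition neutral :: "trm \<Rightarrow> bool" where
  "neutral t \<longleftrightarrow> (\<forall>x u. t \<noteq> Lam x u)"

definition neg_ctx :: "ctx \<Rightarrow> bool" where
  "neg_ctx \<Gamma> \<longleftrightarrow> (\<forall>x A. \<Gamma> x = Some A \<longrightarrow> proper A \<and> (A = tyO \<or> all_neg A))"

definition fvt_ctx :: "ctx \<Rightarrow> nat set" where
  "fvt_ctx \<Gamma> = {n. \<exists>x A. \<Gamma> x = Some A \<and> n \<in> fvt A}"

definition tyO_vars :: "ctx \<Rightarrow> nat set" where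
  "tyO_vars \<Gamma> = {x. \<Gamma> x = Some tyO}"

lemma neg_ctx_upd: "neg_ctx \<Gamma> \<Longrightarrow> proper B \<Longrightarrow> all_neg B \<Longrightarrow> neg_ctx (\<Gamma>(x \<mapsto> B))"
  by (auto simp: neg_ctx_def)

lemma lift_eq_tyO_iff: "lift k A = tyO \<longleftrightarrow> A = tyO"
  by (cases A) (auto simp: tyO_def)

lemma neg_ctx_lift: "neg_ctx \<Gamma> \<Longrightarrow> neg_ctx (map_option (lift 0) \<circ> \<Gamma>)"
  by (fastforce simp: neg_ctx_def proper_lift all_neg_lift lift_eq_tyO_iff)

lemma neg_ctx_proper: "neg_ctx \<Gamma> \<Longrightarrow> \<Gamma> x = Some A \<Longrightarrow> proper A"
  by (auto simp: neg_ctx_def)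

lemma fvt_ctx_lift: "0 \<notin> fvt_ctx (map_option (lift 0) \<circ> \<Gamma>)"
  using lift_notin_fvt[of 0] by (auto simp: fvt_ctx_def)

lemma tyO_vars_lift: "tyO_vars (map_option (lift 0) \<circ> \<Gamma>) = tyO_vars \<Gamma>"
  by (auto simp: tyO_vars_def lift_eq_tyO_iff)

lemma normal_App: "normal (App u v) \<Longrightarrow> neutral u \<and> normal u \<and> normal v"
  by (cases u) (auto simp: neutral_def)

lemma neutral_typing:
  "typing e \<Gamma> t T \<Longrightarrow> normal t \<Longrightarrow> neutral t \<Longrightarrow> neg_ctx \<Gamma> \<Longrightarrow>
    fvt T \<subseteq> fvt_ctx \<Gamma> \<and> (T = tyO \<or> all_neg T)"
proof (induction rule: typing.induct)
  case (ax \<Gamma> x A e)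
  then show ?case by (auto simp: neg_ctx_def fvt_ctx_def)
next
  case (arr_i B e \<Gamma> x t C)
  then show ?case by (simp add: neutral_def)
next
  case (arr_e e \<Gamma> u B C v)
  then show ?case by (auto dest!: normal_App simp: tyO_def all_neg_simps)
next
  case (all_i A e \<Gamma> t)
  then show ?case using fvt_ctx_lift neg_ctx_lift by blast
next
  case (all_e e C \<Gamma> t A)
  then show ?case by (auto simp: tyO_def all_neg_simps)
qed

lemma typing_All_not_neutral:
  "typing e \<Gamma> t (All A) \<Longrightarrow> normal t \<Longrightarrow> neg_ctx \<Gamma> \<Longrightarrow> \<not> neutral t"
  using neutral_typing by (fastforce simp: tyO_def all_neg_simps)

lemma typing_All_all_pos_of_subst:
  assumes "typing e \<Gamma> t (All A)" and "normal t" and "neg_ctx \<Gamma>"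
    and "neutral t \<or> all_pos (subst 0 C A)"
  shows "all_pos (All A)"
proof -
  have "proper (All A)"
    using typing_proper[OF assms(1)] neg_ctx_proper[OF assms(3)] by blast
  then show ?thesis
    using assms typing_All_not_neutral all_pos_All_of_subst by blast
qed

lemma typing_App_all_neg:
  assumes "typing e \<Gamma> u (Arr B C)" and "normal (App u v)" and "neg_ctx \<Gamma>"
  shows "all_pos B" and "all_neg C"
  using neutral_typing[OF assms(1)] normal_App[OF assms(2)] assms(3)
  by (auto simp: tyO_def all_neg_simps)

lemma typF_imp_typF0:
  "typing e \<Gamma> t T \<Longrightarrow> normal t \<Longrightarrow> neg_ctx \<Gamma> \<Longrightarrow> neutral t \<or> all_pos T \<Longrightarrow> typF0 \<Gamma> t T"
proof (induction rule: typing.induct)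
  case (ax \<Gamma> x A e)
  from ax.hyps show ?case by (rule typing.ax)
next
  case (arr_i B e \<Gamma> x t C)
  then have "all_neg B" "all_pos C" by (auto simp: neutral_def all_pos_simps)
  moreover have "normal t" using arr_i.prems(1) by simp
  ultimately have "typF0 (\<Gamma>(x \<mapsto> B)) t C"
    using arr_i.IH neg_ctx_upd[OF arr_i.prems(2) arr_i.hyps(1)] by blast
  with arr_i.hyps(1) show ?case by (rule typing.arr_i)
next
  case (arr_e e \<Gamma> u B C v)
  then show ?case
    using typing_App_all_neg[OF arr_e.hyps(1)] by (auto dest!: normal_App intro: typing.arr_e)
next
  case (all_i A e \<Gamma> t)
  then have "all_pos A"
    using typing_All_not_neutral[OF typing.all_i[OF all_i.hyps]] by (auto simp: all_pos_simps)
  with all_i have "typF0 (map_option (lift 0) \<circ> \<Gamma>) t A" using neg_ctx_lift by blast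
  with all_i.hyps(1) show ?case by (rule typing.all_i)
next
  case (all_e e C \<Gamma> t A)
  have "\<not> neutral t"
    using typing_All_not_neutral all_e by blast
  then obtain x u where t: "t = Lam x u" by (auto simp: neutral_def)
  have "all_pos (All A)"
    using typing_All_all_pos_of_subst all_e by blast
  with all_e have "typF0 \<Gamma> t (All A)" by blast
  then show ?case unfolding t using all_e.hyps(2) by (rule typF0_Lam_all_e)
qed

lemma typF_tyO_vars_not_free:
  "typing e \<Gamma> t T \<Longrightarrow> normal t \<Longrightarrow> neg_ctx \<Gamma> \<Longrightarrow> neutral t \<or> all_pos T \<Longrightarrow> T \<noteq> tyO \<Longrightarrow>
    fv t \<inter> tyO_vars \<Gamma> = {}"
proof (induction rule: typing.induct)
  case (ax \<Gamma> x A e)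
  then show ?case by (simp add: tyO_vars_def)
next
  case (arr_i B e \<Gamma> x t C)
  then have "all_neg B" "all_pos C" by (auto simp: neutral_def all_pos_simps)
  moreover have "normal t" using arr_i.prems(1) by simp
  ultimately have "fv t \<inter> tyO_vars (\<Gamma>(x \<mapsto> B)) = {}"
    using arr_i.IH neg_ctx_upd[OF arr_i.prems(2) arr_i.hyps(1)] tyO_not_all_pos by blast
  then show ?case by (auto simp: tyO_vars_def)
next
  case (arr_e e \<Gamma> u B C v)
  have "all_pos B" using typing_App_all_neg(1)[OF arr_e.hyps(1) arr_e.prems(1,2)] .
  moreover have "neutral u" "normal u" "normal v" using normal_App[OF arr_e.prems(1)] by auto
  ultimately show ?case
    using arr_e.IH arr_e.prems(2) tyO_not_all_pos by (auto simp: tyO_def)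
next
  case (all_i A e \<Gamma> t)
  then have "all_pos A"
    using typing_All_not_neutral[OF typing.all_i[OF all_i.hyps]] by (auto simp: all_pos_simps)
  with all_i have "fv t \<inter> tyO_vars (map_option (lift 0) \<circ> \<Gamma>) = {}"
    using neg_ctx_lift tyO_not_all_pos by blast
  then show ?case by (simp add: tyO_vars_lift)
next
  case (all_e e C \<Gamma> t A)
  have "all_pos (All A)"
    using typing_All_all_pos_of_subst all_e by blast
  with all_e show ?case by (auto simp: tyO_def)
qed

theorem theorem2p2p4:
  assumes "proper D" and "closed_ty D" and "all_pos D" and "0 \<notin> consts_of D"
  shows "syntactical_data_type D"
proof -
  have "input_type D"
    using assms typF_imp_typF0[of True Map.empty] by (auto simp: input_type_def neg_ctx_def)
  moreover have "output_type D"
    unfolding output_type_def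
  proof (intro conjI allI impI)
    fix t \<alpha>
    assume "normal t" and "typF (Map.empty(\<alpha> \<mapsto> tyO)) t D"
    moreover have "neg_ctx (Map.empty(\<alpha> \<mapsto> tyO))" by (simp add: neg_ctx_def tyO_def)
    moreover have "D \<noteq> tyO" using assms(3) tyO_not_all_pos by blast
    ultimately have "fv t \<inter> tyO_vars (Map.empty(\<alpha> \<mapsto> tyO)) = {}"
      using typF_tyO_vars_not_free assms(3) by blast
    then show "\<alpha> \<notin> fv t" by (auto simp: tyO_vars_def)
  qed (use assms in auto)
  ultimately show ?thesis by (simp add: syntactical_data_type_def)
qed

end
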